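(* Let $X=(X,\preceq,\delta)$ be a labeled poset, $Y\subset X$ and $\overline X\in\operatorname{Tot}(X)$, and put $W=P_Y(\overline X)$. Then the relation $\sim_T$ on $P_Y^{-1}(W)$, defined by $\overline X'\sim_T\overline X''$ if and only if $\overline X'=T_{Y_1,Y_2}(\overline X'')$ for some $Y_1,Y_2\in\operatorname{Tot}(Y)$, is an equivalence relation.
   Context: A labeled poset is $(X,\preceq,\delta)$ with $X$ finite, $\preceq$ a partial order and $\delta$ a labeling map; $Y\subset X$ carries the restricted order and labeling. $\operatorname{Tot}(X)$ is the set of $(X,\preceq',\delta)$ with $\preceq'\supseteq\preceq$ a total order. $P_Y:\operatorname{Tot}(X)\to\operatorname{Tot}(X\setminus Y)$ sends a total order on $X$ to its restriction to $X\setminus Y$, and $P_Y^{-1}(W)$ is the set of $\overline X\in\operatorname{Tot}(X)$ whose restriction to $X\setminus Y$ is $W$. For $Y_1,Y_2\in\operatorname{Tot}(Y)$ with orders $\preceq_{Y_1},\preceq_{Y_2}$ and a total order $\overline X=(X,\preceq_{\overline X},\delta)$, $T_{Y_1,Y_2}(\overline X)=(X,(\preceq_{\overline X}\setminus\preceq_{Y_1})\cup\preceq_{Y_2},\delta)$. *)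

theory Defs
  imports Main
begin

text \<open>A labeled poset (X, \<preceq>, \<delta>): carrier, order relation (as a set of pairs), labeling.\<close>
type_synonym ('a, 'l) lposet = "'a set \<times> ('a \<times> 'a) set \<times> ('a \<Rightarrow> 'l)"

definition is_partial_order :: "'a set \<Rightarrow> ('a \<times> 'a) set \<Rightarrow> bool" where
  "is_partial_order X R \<longleftrightarrow> R \<subseteq> X \<times> X \<and> (\<forall>x\<in>X. (x, x) \<in> R)
     \<and> antisym R \<and> trans R"

definition is_total_order :: "'a set \<Rightarrow> ('a \<times> 'a) set \<Rightarrow> bool" where
  "is_total_order X R \<longleftrightarrow> is_partial_order X R
     \<and> (\<forall>x\<in>X. \<forall>y\<in>X. (x, y) \<in> R \<or> (y, x) \<in> R)"

definition labeled_poset :: "('a, 'l) lposet \<Rightarrow> bool" where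
  "labeled_poset P \<longleftrightarrow> (case P of (X, R, \<delta>) \<Rightarrow> finite X \<and> is_partial_order X R)"

definition sub_lposet :: "('a, 'l) lposet \<Rightarrow> 'a set \<Rightarrow> ('a, 'l) lposet" where
  "sub_lposet P Y = (case P of (X, R, \<delta>) \<Rightarrow> (Y, R \<inter> (Y \<times> Y), \<delta>))"

definition Tot :: "('a, 'l) lposet \<Rightarrow> ('a, 'l) lposet set" where
  "Tot P = (case P of (X, R, \<delta>) \<Rightarrow>
      {(X, R', \<delta>) | R'. R \<subseteq> R' \<and> is_total_order X R'})"

definition proj :: "'a set \<Rightarrow> ('a, 'l) lposet \<Rightarrow> ('a, 'l) lposet" where
  "proj Y Q = (case Q of (X, R, \<delta>) \<Rightarrow> sub_lposet Q (X - Y))"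

definition proj_inv :: "('a, 'l) lposet \<Rightarrow> 'a set \<Rightarrow> ('a, 'l) lposet \<Rightarrow> ('a, 'l) lposet set" where
  "proj_inv P Y W = {Q \<in> Tot P. proj Y Q = W}"

definition T_op :: "('a, 'l) lposet \<Rightarrow> ('a, 'l) lposet \<Rightarrow> ('a, 'l) lposet \<Rightarrow> ('a, 'l) lposet" where
  "T_op Y1 Y2 Q = (case Q of (X, R, \<delta>) \<Rightarrow> (X, (R - fst (snd Y1)) \<union> fst (snd Y2), \<delta>))"

definition sim_T :: "('a, 'l) lposet \<Rightarrow> 'a set \<Rightarrow> ('a, 'l) lposet \<Rightarrow> (('a, 'l) lposet \<times> ('a, 'l) lposet) set" where
  "sim_T P Y W = {(A, B). A \<in> proj_inv P Y W \<and> B \<in> proj_inv P Y W \<and>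
      (\<exists>Y1\<in>Tot (sub_lposet P Y). \<exists>Y2\<in>Tot (sub_lposet P Y). A = T_op Y1 Y2 B)}"

end

theory Submission
  imports Defs
begin

text \<open>An operation \<open>T\<^bsub>Y\<^sub>1,Y\<^sub>2\<^esub>\<close> with \<open>Y\<^sub>1, Y\<^sub>2 \<in> Tot(Y)\<close> only replaces
  comparisons inside \<open>Y \<times> Y\<close>. Conversely, two total extensions of \<open>X\<close> that agree outside
  \<open>Y \<times> Y\<close> are related by \<open>T\<close> with \<open>Y\<^sub>1\<close>, \<open>Y\<^sub>2\<close> their restrictions to \<open>Y\<close>. Hence
  \<open>\<sim>\<^sub>T\<close> is the kernel of the map forgetting the comparisons inside \<open>Y\<close>, restricted
  to the fibre, and kernels are equivalence relations. Neither the finiteness of \<open>X\<close> nor the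
  choice of the fibre plays a role.\<close>

definition order_outside :: "'a set \<Rightarrow> ('a, 'l) lposet \<Rightarrow> ('a \<times> 'a) set" where
  "order_outside Y Q = fst (snd Q) - Y \<times> Y"

lemma equiv_kernel_restrict: "equiv A (kernel f \<inter> A \<times> A)"
  unfolding equiv_def kernel_def refl_on_def sym_def trans_def by auto

lemma is_total_order_restrict:
  assumes "is_total_order X R" "Y \<subseteq> X"
  shows "is_total_order Y (R \<inter> Y \<times> Y)"
  using assms unfolding is_total_order_def is_partial_order_def antisym_def trans_def
  by blast

lemma Tot_sub_lposet_order_subset:
  assumes "Q \<in> Tot (sub_lposet P Y)"
  shows "fst (snd Q) \<subseteq> Y \<times> Y"
  using assms unfolding Tot_def sub_lposet_def is_total_order_def is_partial_order_def
  by (auto split: prod.splits)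

lemma sub_lposet_in_Tot:
  assumes "Q \<in> Tot P" "Y \<subseteq> fst P"
  shows "sub_lposet Q Y \<in> Tot (sub_lposet P Y)"
  using assms is_total_order_restrict unfolding Tot_def sub_lposet_def
  by (fastforce split: prod.splits)

lemma order_outside_T_op:
  assumes "Y\<^sub>1 \<in> Tot (sub_lposet P Y)" "Y\<^sub>2 \<in> Tot (sub_lposet P Y)"
  shows "order_outside Y (T_op Y\<^sub>1 Y\<^sub>2 Q) = order_outside Y Q"
  using Tot_sub_lposet_order_subset[OF assms(1)] Tot_sub_lposet_order_subset[OF assms(2)]
  unfolding order_outside_def T_op_def by (auto split: prod.splits)

lemma T_op_sub_lposet:
  assumes "A \<in> Tot P" "B \<in> Tot P" "order_outside Y A = order_outside Y B"
  shows "A = T_op (sub_lposet B Y) (sub_lposet A Y) B"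
proof -
  obtain X R \<delta> where P: "P = (X, R, \<delta>)" by (cases P)
  obtain R\<^sub>A R\<^sub>B where A: "A = (X, R\<^sub>A, \<delta>)" and B: "B = (X, R\<^sub>B, \<delta>)"
    using assms(1,2) unfolding P Tot_def by auto
  have "R\<^sub>A - Y \<times> Y = R\<^sub>B - Y \<times> Y"
    using assms(3) unfolding A B order_outside_def by simp
  then have "R\<^sub>A = (R\<^sub>B - R\<^sub>B \<inter> Y \<times> Y) \<union> R\<^sub>A \<inter> Y \<times> Y" by blast
  then show ?thesis unfolding A B T_op_def sub_lposet_def by simp
qed

lemma sim_T_eq_kernel:
  assumes "Y \<subseteq> fst P"
  shows "sim_T P Y W = kernel (order_outside Y) \<inter> proj_inv P Y W \<times> proj_inv P Y W"
proof
  show "sim_T P Y W \<subseteq> kernel (order_outside Y) \<inter> proj_inv P Y W \<times> proj_inv P Y W"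
    unfolding sim_T_def kernel_def using order_outside_T_op by fastforce
next
  show "kernel (order_outside Y) \<inter> proj_inv P Y W \<times> proj_inv P Y W \<subseteq> sim_T P Y W"
  proof (rule subrelI)
    fix A B
    assume "(A, B) \<in> kernel (order_outside Y) \<inter> proj_inv P Y W \<times> proj_inv P Y W"
    then have fibre: "A \<in> proj_inv P Y W" "B \<in> proj_inv P Y W"
      and same_outside: "order_outside Y A = order_outside Y B"
      unfolding kernel_def by auto
    have Tot: "A \<in> Tot P" "B \<in> Tot P" using fibre unfolding proj_inv_def by auto
    have "sub_lposet B Y \<in> Tot (sub_lposet P Y)" "sub_lposet A Y \<in> Tot (sub_lposet P Y)"
      using sub_lposet_in_Tot[OF _ assms] Tot by blast+
    moreover have "A = T_op (sub_lposet B Y) (sub_lposet A Y) B"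
      using T_op_sub_lposet[OF Tot same_outside] .
    ultimately show "(A, B) \<in> sim_T P Y W"
      unfolding sim_T_def using fibre by blast
  qed
qed

theorem mainTheorem4:
  fixes P :: "('a, 'l) lposet" and Y :: "'a set" and Xbar :: "('a, 'l) lposet"
  assumes "labeled_poset P"
    and "Y \<subseteq> fst P"
    and "Xbar \<in> Tot P"
    and "W = proj Y Xbar"
  shows "equiv (proj_inv P Y W) (sim_T P Y W)"
  unfolding sim_T_eq_kernel[OF assms(2)] by (rule equiv_kernel_restrict)

end
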